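(* Let $\mu$ be a cylindric partition on $\mathcal C_{k,n}$ and $t$ a nonnegative integer. There is a bijection between marble games of length $t$ with initial arrangement $\operatorname{Arr}(\mu)$ and semistandard cylindric tableaux with inner shape $\mu$ (and arbitrary outer shape) whose entries lie in $\{1,2,\dots,t\}$.
   Context: Fix integers $n>k\ge1$. A cylindric partition is a weakly decreasing integer sequence $(\lambda_m)_{m\in\mathbb Z}$ with $\lambda_m=\lambda_{m+k}+n-k$. A point $(x,y)\in\mathbb Z^2$ lies in $\lambda$ if $y\le\lambda_x$. Boxes are classes of points modulo translation by multiples of $(-k,n-k)$; $\pi$ the projection. $\mu\subseteq\lambda$ means $\mu_m\le\lambda_m$ for all $m$. A semistandard cylindric tableau of shape $\lambda/\mu$ (with $\mu\subseteq\lambda$) is a map $R$ from the boxes in $\lambda$ but not $\mu$ to a totally ordered set with $R(\pi(x,y_1))\le R(\pi(x,y_2))$ whenever $(x,y_1),(x,y_2)$ lie in $\lambda$ but not $\mu$ and $y_1<y_2$, and $R(\pi(x_1,y))<R(\pi(x_2,y))$ whenever $(x_1,y),(x_2,y)$ lie in $\lambda$ but not $\mu$ and $x_1<x_2$; $\mu$ is its inner shape. Marble games: there are $k$ people $p_0,\dots,p_{k-1}$ in a circle, indices taken mod $k$, with $p_{i+1}$ the clockwise neighbour of $p_i$. For a cylindric partition $\alpha$, the arrangement $\operatorname{Arr}(\alpha)$ gives $p_i$ exactly $\alpha_{i-1}-\alpha_i$ marbles (a total of $n-k$ marbles). A turn is a tuple $(a_0,\dots,a_{k-1})$ of nonnegative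 integers, applied to an arrangement, in which simultaneously each $p_i$ passes $a_i$ marbles to $p_{i+1}$, where $a_i$ is at most the number of marbles $p_i$ has before the turn. A marble game of length $t$ is an initial arrangement of the $n-k$ marbles among the $k$ people together with a sequence of $t$ successive (valid) turns. *)

theory Defs
  imports Main
begin

definition cylindric_partition :: "nat \<Rightarrow> nat \<Rightarrow> (int \<Rightarrow> int) \<Rightarrow> bool" where
  "cylindric_partition k n lam \<longleftrightarrow>
     (\<forall>m. lam (m + 1) \<le> lam m) \<and> (\<forall>m. lam m = lam (m + int k) + (int n - int k))"

definition in_shape :: "(int \<Rightarrow> int) \<Rightarrow> int \<times> int \<Rightarrow> bool" where
  "in_shape lam p \<longleftrightarrow> snd p \<le> lam (fst p)"

definition cyl_box :: "nat \<Rightarrow> nat \<Rightarrow> int \<times> int \<Rightarrow> (int \<times> int) set" where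
  "cyl_box k n p = {(fst p - j * int k, snd p + j * (int n - int k)) | j. True}"

definition skew_points :: "(int \<Rightarrow> int) \<Rightarrow> (int \<Rightarrow> int) \<Rightarrow> (int \<times> int) set" where
  "skew_points lam mu = {p. in_shape lam p \<and> \<not> in_shape mu p}"

definition skew_boxes :: "nat \<Rightarrow> nat \<Rightarrow> (int \<Rightarrow> int) \<Rightarrow> (int \<Rightarrow> int) \<Rightarrow> (int \<times> int) set set" where
  "skew_boxes k n lam mu = cyl_box k n ` skew_points lam mu"

(* A tableau is the pair (lam, R), where R is a map on
   boxes, set to 0 outside the boxes of lam/mu (so that equality of tableaux is extensional). *)
definition cyl_tableaux :: "nat \<Rightarrow> nat \<Rightarrow> nat \<Rightarrow> (int \<Rightarrow> int)
    \<Rightarrow> ((int \<Rightarrow> int) \<times> ((int \<times> int) set \<Rightarrow> nat)) set" where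
  "cyl_tableaux k n t mu = {(lam, R).
     cylindric_partition k n lam \<and> (\<forall>m. mu m \<le> lam m) \<and>
     (\<forall>B. B \<notin> skew_boxes k n lam mu \<longrightarrow> R B = 0) \<and>
     (\<forall>B\<in>skew_boxes k n lam mu. R B \<in> {1..t}) \<and>
     (\<forall>x y1 y2. (x, y1) \<in> skew_points lam mu \<and> (x, y2) \<in> skew_points lam mu \<and> y1 < y2
        \<longrightarrow> R (cyl_box k n (x, y1)) \<le> R (cyl_box k n (x, y2))) \<and>
     (\<forall>x1 x2 y. (x1, y) \<in> skew_points lam mu \<and> (x2, y) \<in> skew_points lam mu \<and> x1 < x2
        \<longrightarrow> R (cyl_box k n (x1, y)) < R (cyl_box k n (x2, y)))}"

(* Arrangements: person p_i (0 \<le> i < k) holds A i marbles; A i = 0 for i \<ge> k. *)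
definition Arr :: "nat \<Rightarrow> (int \<Rightarrow> int) \<Rightarrow> nat \<Rightarrow> nat" where
  "Arr k alpha i = (if i < k then nat (alpha (int i - 1) - alpha (int i)) else 0)"

(* apply a turn a: p_i passes a i marbles to p_{i+1} (indices mod k) *)
definition turn_step :: "nat \<Rightarrow> (nat \<Rightarrow> nat) \<Rightarrow> (nat \<Rightarrow> nat) \<Rightarrow> nat \<Rightarrow> nat" where
  "turn_step k A a i = (if i < k then A i - a i + a ((i + k - 1) mod k) else 0)"

fun valid_turns :: "nat \<Rightarrow> (nat \<Rightarrow> nat) \<Rightarrow> (nat \<Rightarrow> nat) list \<Rightarrow> bool" where
  "valid_turns k A [] = True"
| "valid_turns k A (a # as) =
     ((\<forall>i<k. a i \<le> A i) \<and> (\<forall>i\<ge>k. a i = 0) \<and> valid_turns k (turn_step k A a) as)"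

definition marble_games :: "nat \<Rightarrow> (nat \<Rightarrow> nat) \<Rightarrow> nat
    \<Rightarrow> ((nat \<Rightarrow> nat) \<times> (nat \<Rightarrow> nat) list) set" where
  "marble_games k A0 t = {(A, ts). A = A0 \<and> length ts = t \<and> valid_turns k A ts}"

end

theory Submission
  imports Defs "HOL-Library.Equipollence"
begin

(* The entries equal to 1 of a semistandard cylindric tableau of inner shape mu occupy a
   cylindric horizontal strip nu/mu (nu (x + 1) <= mu x); removing them and lowering the
   remaining entries by one leaves a tableau of inner shape nu with entries in {1..t-1}.
   On the other side, a first turn a is exactly such a strip: adding a_(x mod k) boxes to
   column x of mu gives a cylindric partition nu with nu/mu a horizontal strip, and Arr nu is
   the arrangement after the turn.  Hence games and tableaux of length t+1 decompose as the
   same dependent sums over strips, and induction on t gives the bijection. *)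

section \<open>Cylindric partitions, boxes and tableaux\<close>

lemma cylindric_partition_step:
  "cylindric_partition k n lam \<Longrightarrow> lam (x + 1) \<le> lam x"
  unfolding cylindric_partition_def by blast

lemma cylindric_partition_period:
  "cylindric_partition k n lam \<Longrightarrow> lam x = lam (x + int k) + (int n - int k)"
  unfolding cylindric_partition_def by blast

lemma cylindric_partition_shift:
  assumes "cylindric_partition k n lam"
  shows "lam (x + j * int k) = lam x - j * (int n - int k)"
proof (induction j rule: int_induct[where k = 0])
  case base
  then show ?case by simp
next
  case (step1 i)
  have "x + (i + 1) * int k = x + i * int k + int k" by (simp add: algebra_simps)
  then show ?case
    using step1 cylindric_partition_period[OF assms, of "x + i * int k"] by (simp add: algebra_simps)
next
  case (step2 i)
  have "x + i * int k = x + (i - 1) * int k + int k" by (simp add: algebra_simps)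
  then show ?case
    using step2 cylindric_partition_period[OF assms, of "x + (i - 1) * int k"] by (simp add: algebra_simps)
qed

lemma cylindric_partition_mod:
  assumes "cylindric_partition k n lam"
  shows "lam x = lam (x mod int k) - (x div int k) * (int n - int k)"
  using cylindric_partition_shift[OF assms, of "x mod int k" "x div int k"] by simp

lemma cylindric_partition_antimono:
  assumes "cylindric_partition k n lam" "x \<le> x'"
  shows "lam x' \<le> lam x"
proof -
  obtain d where d: "x' = x + int d"
    using assms(2) zle_iff_zadd by blast
  have "lam (x + int d) \<le> lam x" for d
  proof (induction d)
    case (Suc d)
    have "x + int (Suc d) = x + int d + 1" by simp
    then show ?case
      using Suc cylindric_partition_step[OF assms(1), of "x + int d"] by (metis order_trans)
  qed simp
  then show ?thesis unfolding d .
qed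

lemma skew_points_iff [simp]: "(x, y) \<in> skew_points lam mu \<longleftrightarrow> mu x < y \<and> y \<le> lam x"
  unfolding skew_points_def in_shape_def by auto

lemma mem_cyl_box_self: "p \<in> cyl_box k n p"
  unfolding cyl_box_def by (cases p) (auto intro: exI[of _ 0])

lemma in_shape_cyl_box:
  assumes "cylindric_partition k n lam" "q \<in> cyl_box k n p"
  shows "in_shape lam q \<longleftrightarrow> in_shape lam p"
proof -
  obtain j where q: "q = (fst p + (- j) * int k, snd p + j * (int n - int k))"
    using assms(2) unfolding cyl_box_def by auto
  show ?thesis
    using cylindric_partition_shift[OF assms(1), of "fst p" "- j"] unfolding q in_shape_def by simp
qed

lemma cyl_box_in_skew_boxes_iff:
  assumes "cylindric_partition k n lam" "cylindric_partition k n mu"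
  shows "cyl_box k n p \<in> skew_boxes k n lam mu \<longleftrightarrow> p \<in> skew_points lam mu"
proof
  assume "cyl_box k n p \<in> skew_boxes k n lam mu"
  then obtain q where q: "q \<in> skew_points lam mu" "cyl_box k n p = cyl_box k n q"
    unfolding skew_boxes_def by auto
  then have "p \<in> cyl_box k n q" using mem_cyl_box_self by metis
  then show "p \<in> skew_points lam mu"
    using q(1) in_shape_cyl_box[OF assms(1)] in_shape_cyl_box[OF assms(2)]
    unfolding skew_points_def by auto
qed (simp add: skew_boxes_def)

lemma cyl_box_translate: "cyl_box k n (x + int k, y - (int n - int k)) = cyl_box k n (x, y)"
proof -
  have "cyl_box k n (x + int k, y - (int n - int k))
      = {(x - (j - 1) * int k, y + (j - 1) * (int n - int k)) | j. True}"
    unfolding cyl_box_def by (simp add: algebra_simps)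
  also have "\<dots> = {(x - j * int k, y + j * (int n - int k)) | j. True}"
    by (metis (no_types, opaque_lifting) add_diff_cancel)
  finally show ?thesis unfolding cyl_box_def by simp
qed

lemma cyl_tableauxD:
  assumes T: "(lam, R) \<in> cyl_tableaux k n t mu" and mu: "cylindric_partition k n mu"
  shows cyl_tableaux_shape: "cylindric_partition k n lam"
    and cyl_tableaux_contains: "mu m \<le> lam m"
    and cyl_tableaux_outside: "B \<notin> skew_boxes k n lam mu \<Longrightarrow> R B = 0"
    and cyl_tableaux_entry: "p \<in> skew_points lam mu \<Longrightarrow> R (cyl_box k n p) \<in> {1..t}"
    and cyl_tableaux_column: "\<lbrakk>mu x < y1; y1 < y2; y2 \<le> lam x\<rbrakk>
      \<Longrightarrow> R (cyl_box k n (x, y1)) \<le> R (cyl_box k n (x, y2))"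
    and cyl_tableaux_row: "\<lbrakk>x1 < x2; mu x1 < y; y \<le> lam x2\<rbrakk>
      \<Longrightarrow> R (cyl_box k n (x1, y)) < R (cyl_box k n (x2, y))"
proof -
  show lam: "cylindric_partition k n lam" and "mu m \<le> lam m"
    and "B \<notin> skew_boxes k n lam mu \<Longrightarrow> R B = 0"
    using T unfolding cyl_tableaux_def by auto
  show "p \<in> skew_points lam mu \<Longrightarrow> R (cyl_box k n p) \<in> {1..t}"
    using T cyl_box_in_skew_boxes_iff[OF lam mu] unfolding cyl_tableaux_def by auto
  show "\<lbrakk>mu x < y1; y1 < y2; y2 \<le> lam x\<rbrakk> \<Longrightarrow> R (cyl_box k n (x, y1)) \<le> R (cyl_box k n (x, y2))"
    using T unfolding cyl_tableaux_def by auto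
  assume "x1 < x2" "mu x1 < y" "y \<le> lam x2"
  moreover have "mu x2 \<le> mu x1" "lam x2 \<le> lam x1"
    using cylindric_partition_antimono[OF mu] cylindric_partition_antimono[OF lam] \<open>x1 < x2\<close> by auto
  ultimately show "R (cyl_box k n (x1, y)) < R (cyl_box k n (x2, y))"
    using T unfolding cyl_tableaux_def by auto
qed

lemma cyl_tableauxI:
  assumes "cylindric_partition k n lam" "\<And>m. mu m \<le> lam m"
    and "\<And>B. B \<notin> skew_boxes k n lam mu \<Longrightarrow> R B = 0"
    and "\<And>p. p \<in> skew_points lam mu \<Longrightarrow> R (cyl_box k n p) \<in> {1..t}"
    and "\<And>x y1 y2. \<lbrakk>mu x < y1; y1 < y2; y2 \<le> lam x\<rbrakk>
      \<Longrightarrow> R (cyl_box k n (x, y1)) \<le> R (cyl_box k n (x, y2))"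
    and "\<And>x1 x2 y. \<lbrakk>x1 < x2; mu x1 < y; y \<le> lam x2\<rbrakk>
      \<Longrightarrow> R (cyl_box k n (x1, y)) < R (cyl_box k n (x2, y))"
  shows "(lam, R) \<in> cyl_tableaux k n t mu"
  using assms unfolding cyl_tableaux_def skew_boxes_def by auto

lemma cyl_tableaux_0:
  assumes mu: "cylindric_partition k n mu"
  shows "cyl_tableaux k n 0 mu = {(mu, \<lambda>_. 0)}"
proof (intro equalityI subsetI)
  fix T assume "T \<in> cyl_tableaux k n 0 mu"
  moreover obtain lam R where T_eq: "T = (lam, R)" by (cases T)
  ultimately have T: "(lam, R) \<in> cyl_tableaux k n 0 mu" by simp
  have no_points: "skew_points lam mu = {}"
    using cyl_tableaux_entry[OF T mu] by fastforce
  have "lam = mu"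
  proof
    fix x
    show "lam x = mu x"
      using no_points cyl_tableaux_contains[OF T mu, of x]
      by (metis empty_iff order.order_iff_strict order_refl skew_points_iff)
  qed
  moreover have "R = (\<lambda>_. 0)"
    using cyl_tableaux_outside[OF T mu] no_points by (auto simp: skew_boxes_def)
  ultimately show "T \<in> {(mu, \<lambda>_. 0)}" using T_eq by simp
next
  have "(mu, \<lambda>_::(int \<times> int) set. 0::nat) \<in> cyl_tableaux k n 0 mu"
    by (rule cyl_tableauxI[OF mu])
      (use cylindric_partition_antimono[OF mu, OF less_imp_le] in \<open>fastforce simp: skew_boxes_def\<close>)+
  then show "T \<in> cyl_tableaux k n 0 mu" if "T \<in> {(mu, \<lambda>_. 0)}" for T
    using that by simp
qed

section \<open>Peeling off the entries equal to one\<close>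

definition horizontal_strips :: "nat \<Rightarrow> nat \<Rightarrow> (int \<Rightarrow> int) \<Rightarrow> (int \<Rightarrow> int) set" where
  "horizontal_strips k n mu =
     {nu. cylindric_partition k n nu \<and> (\<forall>m. mu m \<le> nu m) \<and> (\<forall>x. nu (x + 1) \<le> mu x)}"

definition attach_strip :: "nat \<Rightarrow> nat \<Rightarrow> (int \<Rightarrow> int) \<Rightarrow> (int \<Rightarrow> int)
    \<Rightarrow> (int \<Rightarrow> int) \<times> ((int \<times> int) set \<Rightarrow> nat) \<Rightarrow> (int \<Rightarrow> int) \<times> ((int \<times> int) set \<Rightarrow> nat)" where
  "attach_strip k n mu nu = (\<lambda>(lam, R). (lam, \<lambda>B.
     if B \<in> skew_boxes k n lam mu then if B \<in> skew_boxes k n nu mu then 1 else R B + 1 else 0))"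

lemma attach_strip_at:
  assumes "cylindric_partition k n mu" "cylindric_partition k n nu" "cylindric_partition k n lam"
  shows "snd (attach_strip k n mu nu (lam, R)) (cyl_box k n p) =
    (if p \<in> skew_points lam mu then if p \<in> skew_points nu mu then 1 else R (cyl_box k n p) + 1 else 0)"
  using cyl_box_in_skew_boxes_iff[OF assms(3,1)] cyl_box_in_skew_boxes_iff[OF assms(2,1)]
  by (simp add: attach_strip_def)

lemma attach_strip_mem_cyl_tableaux:
  assumes mu: "cylindric_partition k n mu" and nu: "nu \<in> horizontal_strips k n mu"
    and T: "(lam, R) \<in> cyl_tableaux k n t nu"
  shows "attach_strip k n mu nu (lam, R) \<in> cyl_tableaux k n (Suc t) mu"
proof -
  have nu': "cylindric_partition k n nu" and mu_nu: "\<And>m. mu m \<le> nu m"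
    and strip: "\<And>x. nu (x + 1) \<le> mu x"
    using nu unfolding horizontal_strips_def by auto
  note lam = cyl_tableaux_shape[OF T nu']
  have nu_lam: "\<And>m. nu m \<le> lam m" by (rule cyl_tableaux_contains[OF T nu'])
  let ?R = "snd (attach_strip k n mu nu (lam, R))"
  have at: "?R (cyl_box k n (x, y)) =
      (if mu x < y \<and> y \<le> lam x then if y \<le> nu x then 1 else R (cyl_box k n (x, y)) + 1 else 0)" for x y
    using attach_strip_at[OF mu nu' lam, of R "(x, y)"] mu_nu[of x] by auto
  have entry: "nu x < y \<Longrightarrow> y \<le> lam x \<Longrightarrow> R (cyl_box k n (x, y)) \<in> {1..t}" for x y
    using cyl_tableaux_entry[OF T nu', of "(x, y)"] by simp
  have "(lam, ?R) \<in> cyl_tableaux k n (Suc t) mu"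
  proof (rule cyl_tableauxI[OF lam])
    show "mu m \<le> lam m" for m using mu_nu[of m] nu_lam[of m] by simp
    show "?R B = 0" if "B \<notin> skew_boxes k n lam mu" for B
      using that by (simp add: attach_strip_def)
    show "?R (cyl_box k n p) \<in> {1..Suc t}" if "p \<in> skew_points lam mu" for p
      using that at[of "fst p" "snd p"] entry[of "fst p" "snd p"] by (cases p) auto
    show "?R (cyl_box k n (x, y1)) \<le> ?R (cyl_box k n (x, y2))"
      if "mu x < y1" "y1 < y2" "y2 \<le> lam x" for x y1 y2
      using that at[of x y1] at[of x y2] entry[of x y2] cyl_tableaux_column[OF T nu', of x y1 y2]
      by (cases "y1 \<le> nu x"; cases "y2 \<le> nu x") auto
    show "?R (cyl_box k n (x1, y)) < ?R (cyl_box k n (x2, y))"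
      if "x1 < x2" "mu x1 < y" "y \<le> lam x2" for x1 x2 y
    proof -
      have "nu x2 < y"
        using cylindric_partition_antimono[OF nu', of "x1 + 1" x2] strip[of x1] that by simp
      moreover have "mu x1 < y \<and> y \<le> lam x1" "mu x2 < y"
        using that cylindric_partition_antimono[OF lam, of x1 x2]
          cylindric_partition_antimono[OF mu, of x1 x2] by auto
      ultimately show ?thesis
        using that at[of x1 y] at[of x2 y] entry[of x2 y] cyl_tableaux_row[OF T nu', of x1 x2 y]
        by (cases "y \<le> nu x1") auto
    qed
  qed
  then show ?thesis by (simp add: attach_strip_def)
qed

lemma eq_if_same_bounds_above:
  fixes a b m :: int
  assumes "m \<le> a" "m \<le> b" "\<And>y. m < y \<Longrightarrow> y \<le> a \<longleftrightarrow> y \<le> b"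
  shows "a = b"
  using assms(3)[of "max a b"] assms(1,2) by (cases "m < max a b") auto

(* Columns weakly increase upwards, so the entries 1 of column x fill an interval just above
   mu x; ones_shape records its top. *)
definition ones_shape :: "nat \<Rightarrow> nat \<Rightarrow> (int \<Rightarrow> int) \<Rightarrow> (int \<Rightarrow> int)
    \<Rightarrow> ((int \<times> int) set \<Rightarrow> nat) \<Rightarrow> int \<Rightarrow> int" where
  "ones_shape k n mu lam R x =
     Max (insert (mu x) {y. mu x < y \<and> y \<le> lam x \<and> R (cyl_box k n (x, y)) = 1})"

lemma finite_ones_column: "finite {y. mu x < y \<and> y \<le> lam x \<and> P y}" for mu lam :: "int \<Rightarrow> int"
  by (rule finite_subset[of _ "{mu x..lam x}"]) auto

lemma ones_shape_ge: "mu x \<le> ones_shape k n mu lam R x"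
  unfolding ones_shape_def using finite_ones_column[of mu x lam] by simp

lemma ones_shape_iff:
  assumes T: "(lam, R) \<in> cyl_tableaux k n t mu" and mu: "cylindric_partition k n mu"
    and y: "mu x < y"
  shows "y \<le> ones_shape k n mu lam R x \<longleftrightarrow> y \<le> lam x \<and> R (cyl_box k n (x, y)) = 1"
proof
  assume "y \<le> lam x \<and> R (cyl_box k n (x, y)) = 1"
  then show "y \<le> ones_shape k n mu lam R x"
    unfolding ones_shape_def using y finite_ones_column by (intro Max_ge_iff[THEN iffD2]) auto
next
  let ?top = "ones_shape k n mu lam R x"
  assume y_top: "y \<le> ?top"
  have "?top \<in> insert (mu x) {y. mu x < y \<and> y \<le> lam x \<and> R (cyl_box k n (x, y)) = 1}"
    unfolding ones_shape_def using finite_ones_column by (intro Max_in) auto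
  then have top: "mu x < ?top" "?top \<le> lam x" "R (cyl_box k n (x, ?top)) = 1"
    using y y_top by auto
  have "R (cyl_box k n (x, y)) \<le> R (cyl_box k n (x, ?top))"
    using cyl_tableaux_column[OF T mu, of x y ?top] y y_top top by (cases "y = ?top") auto
  moreover have "R (cyl_box k n (x, y)) \<ge> 1"
    using cyl_tableaux_entry[OF T mu, of "(x, y)"] y y_top top by simp
  ultimately show "y \<le> lam x \<and> R (cyl_box k n (x, y)) = 1"
    using y_top top by simp
qed

lemma ones_shape_le:
  assumes "(lam, R) \<in> cyl_tableaux k n t mu" "cylindric_partition k n mu"
  shows "ones_shape k n mu lam R x \<le> lam x"
  using ones_shape_iff[OF assms, of x "ones_shape k n mu lam R x"] ones_shape_ge[of mu x]
    cyl_tableaux_contains[OF assms, of x]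
  by (cases "mu x < ones_shape k n mu lam R x") auto

lemma ones_shape_mem_horizontal_strips:
  assumes T: "(lam, R) \<in> cyl_tableaux k n t mu" and mu: "cylindric_partition k n mu"
  shows "ones_shape k n mu lam R \<in> horizontal_strips k n mu"
proof -
  let ?nu = "ones_shape k n mu lam R"
  note iff = ones_shape_iff[OF T mu]
  note lam = cyl_tableaux_shape[OF T mu]
  have strip: "?nu (x + 1) \<le> mu x" for x
  proof (rule ccontr)
    assume "\<not> ?nu (x + 1) \<le> mu x"
    then have "mu x < ?nu (x + 1)" "mu (x + 1) < ?nu (x + 1)"
      using cylindric_partition_step[OF mu, of x] by auto
    then have "?nu (x + 1) \<le> lam (x + 1)" "R (cyl_box k n (x + 1, ?nu (x + 1))) = 1"
      using iff[of "x + 1" "?nu (x + 1)"] by auto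
    moreover have "R (cyl_box k n (x, ?nu (x + 1))) \<ge> 1"
      using cyl_tableaux_entry[OF T mu, of "(x, ?nu (x + 1))"] \<open>mu x < ?nu (x + 1)\<close>
        cylindric_partition_step[OF lam, of x] calculation(1) by simp
    ultimately show False
      using cyl_tableaux_row[OF T mu, of x "x + 1" "?nu (x + 1)"] \<open>mu x < ?nu (x + 1)\<close> by simp
  qed
  have period: "?nu x = ?nu (x + int k) + (int n - int k)" for x
  proof (rule eq_if_same_bounds_above[of "mu x"])
    show "mu x \<le> ?nu x" by (rule ones_shape_ge)
    show "mu x \<le> ?nu (x + int k) + (int n - int k)"
      using ones_shape_ge[of mu "x + int k"] cylindric_partition_period[OF mu, of x] by simp
    fix y assume y: "mu x < y"
    have "y \<le> ?nu x \<longleftrightarrow> y \<le> lam x \<and> R (cyl_box k n (x, y)) = 1"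
      by (rule iff[OF y])
    also have "\<dots> \<longleftrightarrow> y - (int n - int k) \<le> lam (x + int k)
        \<and> R (cyl_box k n (x + int k, y - (int n - int k))) = 1"
    proof -
      have "y \<le> lam x \<longleftrightarrow> y - (int n - int k) \<le> lam (x + int k)"
        using cylindric_partition_period[OF lam, of x] by linarith
      then show ?thesis by (simp add: cyl_box_translate)
    qed
    also have "\<dots> \<longleftrightarrow> y - (int n - int k) \<le> ?nu (x + int k)"
      using iff[of "x + int k" "y - (int n - int k)"] y cylindric_partition_period[OF mu, of x] by simp
    finally show "y \<le> ?nu x \<longleftrightarrow> y \<le> ?nu (x + int k) + (int n - int k)" by linarith
  qed
  have "cylindric_partition k n ?nu"
    unfolding cylindric_partition_def using strip ones_shape_ge period by (meson order_trans)
  then show ?thesis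
    unfolding horizontal_strips_def using strip ones_shape_ge by blast
qed

definition detach_strip :: "nat \<Rightarrow> nat \<Rightarrow> (int \<Rightarrow> int) \<Rightarrow> (int \<Rightarrow> int) \<times> ((int \<times> int) set \<Rightarrow> nat)
    \<Rightarrow> (int \<Rightarrow> int) \<times> (int \<Rightarrow> int) \<times> ((int \<times> int) set \<Rightarrow> nat)" where
  "detach_strip k n mu = (\<lambda>(lam, R). let nu = ones_shape k n mu lam R in
     (nu, lam, \<lambda>B. if B \<in> skew_boxes k n lam nu then R B - 1 else 0))"

lemma detach_strip_mem:
  assumes T: "(lam, R) \<in> cyl_tableaux k n (Suc t) mu" and mu: "cylindric_partition k n mu"
  shows "detach_strip k n mu (lam, R) \<in> Sigma (horizontal_strips k n mu) (cyl_tableaux k n t)"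
proof -
  define nu where "nu = ones_shape k n mu lam R"
  define R' where "R' B = (if B \<in> skew_boxes k n lam nu then R B - 1 else 0)" for B
  have strip: "nu \<in> horizontal_strips k n mu"
    unfolding nu_def by (rule ones_shape_mem_horizontal_strips[OF T mu])
  then have nu': "cylindric_partition k n nu" and mu_nu: "\<And>x. mu x \<le> nu x"
    unfolding horizontal_strips_def by auto
  note lam = cyl_tableaux_shape[OF T mu]
  have above: "R (cyl_box k n (x, y)) \<in> {2..Suc t} \<and> R' (cyl_box k n (x, y)) = R (cyl_box k n (x, y)) - 1"
    if "nu x < y" "y \<le> lam x" for x y
  proof -
    have "mu x < y" using that mu_nu[of x] by simp
    then have "R (cyl_box k n (x, y)) \<noteq> 1" "R (cyl_box k n (x, y)) \<in> {1..Suc t}"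
      using ones_shape_iff[OF T mu, of x y] cyl_tableaux_entry[OF T mu, of "(x, y)"] that
      unfolding nu_def by auto
    then show ?thesis
      using that cyl_box_in_skew_boxes_iff[OF lam nu'] unfolding R'_def by auto
  qed
  have "(lam, R') \<in> cyl_tableaux k n t nu"
  proof (rule cyl_tableauxI[OF lam])
    show "nu m \<le> lam m" for m
      unfolding nu_def by (rule ones_shape_le[OF T mu])
    show "R' B = 0" if "B \<notin> skew_boxes k n lam nu" for B
      using that unfolding R'_def by simp
    show "R' (cyl_box k n p) \<in> {1..t}" if "p \<in> skew_points lam nu" for p
      using that above[of "fst p" "snd p"] by (cases p) auto
    show "R' (cyl_box k n (x, y1)) \<le> R' (cyl_box k n (x, y2))"
      if "nu x < y1" "y1 < y2" "y2 \<le> lam x" for x y1 y2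
      using that above[of x y1] above[of x y2] mu_nu[of x]
        cyl_tableaux_column[OF T mu, of x y1 y2] by auto
    show "R' (cyl_box k n (x1, y)) < R' (cyl_box k n (x2, y))"
      if "x1 < x2" "nu x1 < y" "y \<le> lam x2" for x1 x2 y
    proof -
      have "nu x2 < y" "y \<le> lam x1"
        using that cylindric_partition_antimono[OF nu', of x1 x2]
          cylindric_partition_antimono[OF lam, of x1 x2] by auto
      then show ?thesis
        using that above[of x1 y] above[of x2 y] mu_nu[of x1]
          cyl_tableaux_row[OF T mu, of x1 x2 y] by auto
    qed
  qed
  then show ?thesis
    using strip unfolding detach_strip_def nu_def R'_def by (simp add: Let_def)
qed

lemma attach_detach_strip:
  assumes T: "(lam, R) \<in> cyl_tableaux k n (Suc t) mu" and mu: "cylindric_partition k n mu"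
  shows "case_prod (attach_strip k n mu) (detach_strip k n mu (lam, R)) = (lam, R)"
proof -
  define nu where "nu = ones_shape k n mu lam R"
  have nu': "cylindric_partition k n nu" and mu_nu: "\<And>x. mu x \<le> nu x"
    using ones_shape_mem_horizontal_strips[OF T mu] unfolding nu_def horizontal_strips_def by auto
  note lam = cyl_tableaux_shape[OF T mu]
  have "(if B \<in> skew_boxes k n lam mu then if B \<in> skew_boxes k n nu mu then 1
      else (if B \<in> skew_boxes k n lam nu then R B - 1 else 0) + 1 else 0) = R B" for B
  proof (cases "B \<in> skew_boxes k n lam mu")
    case True
    then obtain x y where B: "B = cyl_box k n (x, y)" and y: "mu x < y" "y \<le> lam x"
      unfolding skew_boxes_def by auto
    have "R B \<in> {1..Suc t}"
      using cyl_tableaux_entry[OF T mu, of "(x, y)"] y B by simp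
    then show ?thesis
      using True ones_shape_iff[OF T mu y(1)] y B
        cyl_box_in_skew_boxes_iff[OF nu' mu] cyl_box_in_skew_boxes_iff[OF lam nu']
      unfolding nu_def by auto
  qed (use cyl_tableaux_outside[OF T mu] in simp)
  then show ?thesis
    unfolding detach_strip_def attach_strip_def nu_def by (simp add: Let_def)
qed

lemma detach_attach_strip:
  assumes mu: "cylindric_partition k n mu" and strip: "nu \<in> horizontal_strips k n mu"
    and T: "(lam, R) \<in> cyl_tableaux k n t nu"
  shows "detach_strip k n mu (attach_strip k n mu nu (lam, R)) = (nu, lam, R)"
proof -
  have nu': "cylindric_partition k n nu" and mu_nu: "\<And>x. mu x \<le> nu x"
    using strip unfolding horizontal_strips_def by auto
  note lam = cyl_tableaux_shape[OF T nu']
  define R2 where "R2 = snd (attach_strip k n mu nu (lam, R))"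
  have attached: "(lam, R2) \<in> cyl_tableaux k n (Suc t) mu"
    using attach_strip_mem_cyl_tableaux[OF mu strip T] unfolding R2_def attach_strip_def by simp
  have at: "R2 (cyl_box k n p) =
      (if p \<in> skew_points lam mu then if p \<in> skew_points nu mu then 1 else R (cyl_box k n p) + 1 else 0)"
    for p unfolding R2_def by (rule attach_strip_at[OF mu nu' lam])
  have entry: "nu x < y \<Longrightarrow> y \<le> lam x \<Longrightarrow> R (cyl_box k n (x, y)) \<ge> 1" for x y
    using cyl_tableaux_entry[OF T nu', of "(x, y)"] by simp
  have shape: "ones_shape k n mu lam R2 = nu"
  proof
    fix x
    show "ones_shape k n mu lam R2 x = nu x"
    proof (rule eq_if_same_bounds_above[of "mu x"])
      fix y assume "mu x < y"
      then show "y \<le> ones_shape k n mu lam R2 x \<longleftrightarrow> y \<le> nu x"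
        using ones_shape_iff[OF attached mu] at[of "(x, y)"] entry[of x y]
          cyl_tableaux_contains[OF T nu', of x] by auto
    qed (use ones_shape_ge mu_nu in auto)
  qed
  have "(if B \<in> skew_boxes k n lam nu then R2 B - 1 else 0) = R B" for B
  proof (cases "B \<in> skew_boxes k n lam nu")
    case True
    then obtain x y where B: "B = cyl_box k n (x, y)" and y: "nu x < y" "y \<le> lam x"
      unfolding skew_boxes_def by auto
    then show ?thesis using True at[of "(x, y)"] mu_nu[of x] by auto
  qed (use cyl_tableaux_outside[OF T nu'] in simp)
  moreover have "attach_strip k n mu nu (lam, R) = (lam, R2)"
    unfolding R2_def attach_strip_def by simp
  ultimately show ?thesis
    using shape unfolding detach_strip_def by (simp add: Let_def)
qed

lemma bij_betw_attach_strip: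
  assumes "cylindric_partition k n mu"
  shows "bij_betw (case_prod (attach_strip k n mu))
    (Sigma (horizontal_strips k n mu) (cyl_tableaux k n t)) (cyl_tableaux k n (Suc t) mu)"
  by (rule bij_betw_byWitness[where f' = "detach_strip k n mu"])
    (use assms detach_attach_strip attach_detach_strip attach_strip_mem_cyl_tableaux detach_strip_mem
      in fastforce)+

section \<open>Turns as horizontal strips\<close>

definition turns_from :: "nat \<Rightarrow> (nat \<Rightarrow> nat) \<Rightarrow> (nat \<Rightarrow> nat) set" where
  "turns_from k A = {a. (\<forall>i<k. a i \<le> A i) \<and> (\<forall>i\<ge>k. a i = 0)}"

lemma marble_games_0: "marble_games k A 0 = {(A, [])}"
  unfolding marble_games_def by auto

lemma marble_games_Suc_eqpoll:
  "marble_games k A (Suc t) \<approx> Sigma (turns_from k A) (\<lambda>a. marble_games k (turn_step k A a) t)"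
  unfolding eqpoll_def
proof (intro exI bij_betw_byWitness[where f' = "\<lambda>(a, B, ts). (A, a # ts)"])
  show "(\<lambda>(B, ts). (hd ts, turn_step k A (hd ts), tl ts)) ` marble_games k A (Suc t)
      \<subseteq> Sigma (turns_from k A) (\<lambda>a. marble_games k (turn_step k A a) t)"
    unfolding marble_games_def turns_from_def by (auto simp: length_Suc_conv)
qed (auto simp: marble_games_def turns_from_def length_Suc_conv)

lemma Arr_mod:
  assumes mu: "cylindric_partition k n mu" and k: "1 \<le> k"
  shows "int (Arr k mu (nat (x mod int k))) = mu (x - 1) - mu x"
proof -
  define j where "j = x mod int k"
  define q where "q = x div int k"
  have j: "0 \<le> j" "j < int k" "x = j + q * int k"
    using k unfolding j_def q_def by auto
  have "mu (x - 1) = mu (j - 1) - q * (int n - int k)" "mu x = mu j - q * (int n - int k)"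
    using cylindric_partition_shift[OF mu, of "j - 1" q] cylindric_partition_shift[OF mu, of j q] j(3)
    by (simp_all add: algebra_simps)
  moreover have "int (Arr k mu (nat j)) = mu (j - 1) - mu j"
    using j cylindric_partition_step[OF mu, of "j - 1"] unfolding Arr_def by (simp add: nat_less_iff)
  ultimately show ?thesis unfolding j_def by simp
qed

definition add_turn :: "nat \<Rightarrow> (int \<Rightarrow> int) \<Rightarrow> (nat \<Rightarrow> nat) \<Rightarrow> int \<Rightarrow> int" where
  "add_turn k mu a x = mu x + int (a (nat (x mod int k)))"

lemma add_turn_mem_horizontal_strips:
  assumes mu: "cylindric_partition k n mu" and k: "1 \<le> k" and a: "a \<in> turns_from k (Arr k mu)"
  shows "add_turn k mu a \<in> horizontal_strips k n mu"
proof -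
  let ?nu = "add_turn k mu a"
  have strip: "?nu (x + 1) \<le> mu x" for x
  proof -
    have "nat ((x + 1) mod int k) < k"
      using k by (simp add: nat_less_iff)
    then have "a (nat ((x + 1) mod int k)) \<le> Arr k mu (nat ((x + 1) mod int k))"
      using a unfolding turns_from_def by blast
    then show ?thesis
      using Arr_mod[OF mu k, of "x + 1"] unfolding add_turn_def by simp
  qed
  have period: "?nu x = ?nu (x + int k) + (int n - int k)" for x
    using cylindric_partition_period[OF mu, of x] unfolding add_turn_def by simp
  have above: "mu x \<le> ?nu x" for x
    unfolding add_turn_def by simp
  have "cylindric_partition k n ?nu"
    unfolding cylindric_partition_def using strip above period by (meson order_trans)
  then show ?thesis
    unfolding horizontal_strips_def using strip above by blast
qed

lemma bij_betw_add_turn: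
  assumes mu: "cylindric_partition k n mu" and k: "1 \<le> k"
  shows "bij_betw (add_turn k mu) (turns_from k (Arr k mu)) (horizontal_strips k n mu)"
proof (rule bij_betw_byWitness[where f' = "\<lambda>nu i. if i < k then nat (nu (int i) - mu (int i)) else 0"])
  have mod_k: "nat (int i mod int k) = i" if "i < k" for i
    using that by (simp add: of_nat_mod[symmetric] del: of_nat_mod)
  show "\<forall>a \<in> turns_from k (Arr k mu).
      (\<lambda>i. if i < k then nat (add_turn k mu a (int i) - mu (int i)) else 0) = a"
    unfolding turns_from_def add_turn_def by (auto simp: mod_k)
  show "\<forall>nu \<in> horizontal_strips k n mu.
      add_turn k mu (\<lambda>i. if i < k then nat (nu (int i) - mu (int i)) else 0) = nu"
  proof
    fix nu assume "nu \<in> horizontal_strips k n mu"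
    then have nu: "cylindric_partition k n nu" and mu_nu: "\<And>x. mu x \<le> nu x"
      unfolding horizontal_strips_def by auto
    show "add_turn k mu (\<lambda>i. if i < k then nat (nu (int i) - mu (int i)) else 0) = nu"
    proof
      fix x
      have "0 \<le> x mod int k" "x mod int k < int k" using k by auto
      then show "add_turn k mu (\<lambda>i. if i < k then nat (nu (int i) - mu (int i)) else 0) x = nu x"
        using cylindric_partition_mod[OF nu, of x] cylindric_partition_mod[OF mu, of x]
          mu_nu[of "x mod int k"]
        unfolding add_turn_def by (simp add: nat_less_iff)
    qed
  qed
  show "add_turn k mu ` turns_from k (Arr k mu) \<subseteq> horizontal_strips k n mu"
    using add_turn_mem_horizontal_strips[OF mu k] by blast
  show "(\<lambda>nu i. if i < k then nat (nu (int i) - mu (int i)) else 0) ` horizontal_strips k n mu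
      \<subseteq> turns_from k (Arr k mu)"
    unfolding horizontal_strips_def turns_from_def Arr_def
    by clarsimp (metis diff_add_cancel diff_right_mono nat_mono)
qed

lemma turn_step_Arr:
  assumes mu: "cylindric_partition k n mu" and k: "1 \<le> k" and a: "a \<in> turns_from k (Arr k mu)"
  shows "turn_step k (Arr k mu) a = Arr k (add_turn k mu a)"
proof
  fix i
  show "turn_step k (Arr k mu) a i = Arr k (add_turn k mu a) i"
  proof (cases "i < k")
    case True
    have prev: "nat ((int i - 1) mod int k) = (i + k - 1) mod k"
    proof (cases i)
      case 0
      then show ?thesis using k by (simp add: zmod_minus1 nat_diff_distrib)
    next
      case (Suc i')
      then show ?thesis using True by (simp add: of_nat_mod[symmetric] del: of_nat_mod)
    qed
    have self: "nat (int i mod int k) = i"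
      using True by (simp add: of_nat_mod[symmetric] del: of_nat_mod)
    have "a i \<le> nat (mu (int i - 1) - mu (int i))"
      using a True unfolding turns_from_def Arr_def by auto
    then show ?thesis
      using True cylindric_partition_step[OF mu, of "int i - 1"]
      unfolding turn_step_def Arr_def add_turn_def prev self by simp
  next
    case False
    then show ?thesis unfolding turn_step_def Arr_def by simp
  qed
qed

theorem mainTheorem8:
  fixes k n t :: nat and mu :: "int \<Rightarrow> int"
  assumes "1 \<le> k" and "k < n" and "cylindric_partition k n mu"
  shows "\<exists>f. bij_betw f (marble_games k (Arr k mu) t) (cyl_tableaux k n t mu)"
  unfolding eqpoll_def[symmetric]
  using assms(3)
proof (induction t arbitrary: mu)
  case 0
  then show ?case by (simp add: marble_games_0 cyl_tableaux_0 singleton_eqpoll)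
next
  case (Suc t)
  have "marble_games k (Arr k mu) (Suc t)
      \<approx> Sigma (turns_from k (Arr k mu)) (\<lambda>a. marble_games k (turn_step k (Arr k mu) a) t)"
    by (rule marble_games_Suc_eqpoll)
  also have "\<dots> = Sigma (turns_from k (Arr k mu)) (\<lambda>a. marble_games k (Arr k (add_turn k mu a)) t)"
    by (rule Sigma_cong) (simp_all add: turn_step_Arr[OF Suc.prems assms(1)])
  also have "\<dots> \<approx> Sigma (horizontal_strips k n mu) (cyl_tableaux k n t)"
    using Suc.IH add_turn_mem_horizontal_strips[OF Suc.prems assms(1)]
    by (intro Sigma_eqpoll_cong[OF bij_betw_add_turn[OF Suc.prems assms(1)]])
      (simp add: horizontal_strips_def)
  also have "\<dots> \<approx> cyl_tableaux k n (Suc t) mu"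
    using bij_betw_attach_strip[OF Suc.prems] unfolding eqpoll_def by blast
  finally show ?case .
qed

end
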